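(* Let $N\ge 1$, $d\ge 1$, let $p_1,\dots,p_N>0$ with $\sum_{c=1}^N p_c=1$, and let $f^1,\dots,f^N:\mathbb{R}^d\to\mathbb{R}$ be differentiable functions such that each $f^c$ is $L$-smooth and $m$-strongly convex, where $0<m\le L$. Let $\eta\in(0,\frac{1}{L+m}]$. Then for any vectors $\theta^1,\dots,\theta^N,\beta^1,\dots,\beta^N\in\mathbb{R}^d$, writing $\theta=\sum_{c=1}^N p_c\theta^c$, $\beta=\sum_{c=1}^N p_c\beta^c$, $G(\theta^{1:N})=\sum_{c=1}^N p_c\nabla f^c(\theta^c)$ and $G(\beta^{1:N})=\sum_{c=1}^N p_c\nabla f^c(\beta^c)$, we have $$\big\|\beta-\theta-\eta\big(G(\beta^{1:N})-G(\theta^{1:N})\big)\big\|_2^2\le (1-\eta m)\|\beta-\theta\|_2^2+4\eta L\sum_{c=1}^N p_c\big(\|\beta^c-\beta\|_2^2+\|\theta^c-\theta\|_2^2\big).$$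
   Context: A differentiable $g:\mathbb{R}^d\to\mathbb{R}$ is $L$-smooth if $g(y)\le g(x)+\langle\nabla g(x),y-x\rangle+\frac L2\|y-x\|_2^2$ for all $x,y$ (equivalently $\nabla g$ is $L$-Lipschitz), and $m$-strongly convex if $g(x)\ge g(y)+\langle\nabla g(y),x-y\rangle+\frac m2\|x-y\|_2^2$ for all $x,y$. *)

theory Defs
  imports "HOL-Analysis.Analysis"
begin

text \<open>The gradient of g is passed explicitly as dg; elsewhere it is tied to g via has_derivative.\<close>

definition L_smooth :: "('a::real_inner \<Rightarrow> real) \<Rightarrow> ('a \<Rightarrow> 'a) \<Rightarrow> real \<Rightarrow> bool" where
  "L_smooth g dg L \<longleftrightarrow>
     (\<forall>x y. g y \<le> g x + inner (dg x) (y - x) + L / 2 * (norm (y - x))\<^sup>2)"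

definition strongly_convex :: "('a::real_inner \<Rightarrow> real) \<Rightarrow> ('a \<Rightarrow> 'a) \<Rightarrow> real \<Rightarrow> bool" where
  "strongly_convex g dg m \<longleftrightarrow>
     (\<forall>x y. g x \<ge> g y + inner (dg y) (x - y) + m / 2 * (norm (x - y))\<^sup>2)"

end

theory Submission imports Defs begin

(* Write d c = beta_c - theta_c and Delta c = grad f_c(beta_c) - grad f_c(theta_c); then beta - theta
   and G(beta) - G(theta) are the p-averages u and g of d and Delta. Applying co-coercivity of convex
   smooth functions to f_c - m/2 |.|^2 gives |Delta c|^2 + m L |d c|^2 <= (L + m) <d c, Delta c>.
   Splitting <u, Delta c> = <d c, Delta c> - <d c - u, Delta c> and using Young's inequality with
   weight 2L, this yields for eta <= 1/(L + m) the per-client bound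
     eta^2 |Delta c|^2 - 2 eta <u, Delta c> <= - eta m |d c|^2 + 2 eta L |d c - u|^2.
   Averaging over c and Jensen's inequality for |.|^2 (for g and for u) give the contraction, and
   |d c - u|^2 <= 2 (|beta_c - beta|^2 + |theta_c - theta|^2) turns the last term into the client drift. *)

lemma Youngs_inequality_inner:
  fixes x y :: "'a::real_inner"
  assumes "r > 0"
  shows "2 * inner x y \<le> r * (norm x)\<^sup>2 + (norm y)\<^sup>2 / r"
proof -
  have "0 \<le> (norm (r *\<^sub>R x - y))\<^sup>2" by simp
  also have "\<dots> = r\<^sup>2 * (norm x)\<^sup>2 - 2 * r * inner x y + (norm y)\<^sup>2"
    by (simp add: power2_norm_eq_inner inner_diff_left inner_diff_right inner_commute algebra_simps)
      (simp add: power2_eq_square)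
  finally have "2 * r * inner x y \<le> r * (r * (norm x)\<^sup>2 + (norm y)\<^sup>2 / r)"
    using assms by (simp add: algebra_simps power2_eq_square)
  then show ?thesis using assms by simp
qed

lemma norm_diff_sq_le: "(norm (x - y))\<^sup>2 \<le> 2 * ((norm x)\<^sup>2 + (norm (y::'a::real_inner))\<^sup>2)"
proof -
  have "0 \<le> (norm (x + y))\<^sup>2" by simp
  then show ?thesis
    by (simp add: power2_norm_eq_inner inner_diff_left inner_diff_right inner_add_left inner_add_right
        inner_commute)
qed

lemma weighted_variance_eq:
  fixes x :: "'i \<Rightarrow> 'a::real_inner"
  assumes "sum p I = 1"
  shows "(\<Sum>c\<in>I. p c * (norm (x c - (\<Sum>i\<in>I. p i *\<^sub>R x i)))\<^sup>2)
       = (\<Sum>c\<in>I. p c * (norm (x c))\<^sup>2) - (norm (\<Sum>i\<in>I. p i *\<^sub>R x i))\<^sup>2"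
proof -
  define s where "s = (\<Sum>i\<in>I. p i *\<^sub>R x i)"
  have "(\<Sum>c\<in>I. p c * (norm (x c - s))\<^sup>2)
      = (\<Sum>c\<in>I. p c * (norm (x c))\<^sup>2 - 2 * (p c * inner (x c) s) + p c * (norm s)\<^sup>2)"
    by (intro sum.cong refl)
      (simp add: power2_norm_eq_inner inner_commute algebra_simps)
  also have "\<dots> = (\<Sum>c\<in>I. p c * (norm (x c))\<^sup>2) - 2 * (\<Sum>c\<in>I. p c * inner (x c) s)
      + (\<Sum>c\<in>I. p c) * (norm s)\<^sup>2"
    by (simp add: sum.distrib sum_subtractf sum_distrib_left sum_distrib_right)
  also have "(\<Sum>c\<in>I. p c * inner (x c) s) = (norm s)\<^sup>2"
    by (simp add: s_def inner_sum_left power2_norm_eq_inner)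
  finally show ?thesis using assms by (simp add: s_def)
qed

lemma norm_weighted_mean_sq_le:
  fixes x :: "'i \<Rightarrow> 'a::real_inner"
  assumes "\<And>c. c \<in> I \<Longrightarrow> p c \<ge> 0" and "sum p I = 1"
  shows "(norm (\<Sum>c\<in>I. p c *\<^sub>R x c))\<^sup>2 \<le> (\<Sum>c\<in>I. p c * (norm (x c))\<^sup>2)"
proof -
  have "0 \<le> (\<Sum>c\<in>I. p c * (norm (x c - (\<Sum>i\<in>I. p i *\<^sub>R x i)))\<^sup>2)"
    using assms(1) by (intro sum_nonneg) simp
  then show ?thesis using weighted_variance_eq[OF assms(2), of x] by linarith
qed

lemma convex_smooth_gradient_gap:
  fixes h :: "'a::real_inner \<Rightarrow> real"
  assumes smooth: "L_smooth h dh K" and convex: "strongly_convex h dh 0"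
  shows "h b \<ge> h a + inner (dh a) (b - a) + (t - K / 2 * t\<^sup>2) * (norm (dh b - dh a))\<^sup>2"
proof -
  define g where "g = dh b - dh a"
  define z where "z = b - t *\<^sub>R g"
  have "h a + inner (dh a) (z - a) \<le> h z"
    using convex unfolding strongly_convex_def by simp
  also have "h z \<le> h b + inner (dh b) (z - b) + K / 2 * (norm (z - b))\<^sup>2"
    using smooth unfolding L_smooth_def by blast
  also have "inner (dh b) (z - b) = inner (dh a) (z - b) - t * (norm g)\<^sup>2"
    by (simp add: z_def g_def power2_norm_eq_inner inner_commute algebra_simps)
  also have "(norm (z - b))\<^sup>2 = t\<^sup>2 * (norm g)\<^sup>2"
    by (simp add: z_def power_mult_distrib)
  finally show ?thesis
    by (simp add: z_def g_def inner_diff_right algebra_simps)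
qed

lemma convex_smooth_cocoercive_param:
  fixes h :: "'a::real_inner \<Rightarrow> real"
  assumes "L_smooth h dh K" and "strongly_convex h dh 0"
  shows "(2 * t - K * t\<^sup>2) * (norm (dh x - dh y))\<^sup>2 \<le> inner (x - y) (dh x - dh y)"
  using convex_smooth_gradient_gap[OF assms, of x y t] convex_smooth_gradient_gap[OF assms, of y x t]
  by (simp add: norm_minus_commute inner_diff_left inner_diff_right inner_commute algebra_simps)

lemma convex_smooth_cocoercive:
  fixes h :: "'a::real_inner \<Rightarrow> real"
  assumes "L_smooth h dh K" and "strongly_convex h dh 0" and "K \<ge> 0"
  shows "(norm (dh x - dh y))\<^sup>2 \<le> K * inner (x - y) (dh x - dh y)"
proof (cases "K = 0")
  case True
  define G where "G = (norm (dh x - dh y))\<^sup>2"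
  define s where "s = inner (x - y) (dh x - dh y)"
  have bound: "2 * t * G \<le> s" for t
    using convex_smooth_cocoercive_param[OF assms(1,2), of t x y] True by (simp add: G_def s_def)
  have "G \<le> 0"
  proof (rule ccontr)
    assume "\<not> G \<le> 0"
    then have "2 * ((\<bar>s\<bar> + 1) / (2 * G)) * G = \<bar>s\<bar> + 1" by simp
    with bound show False by (metis abs_ge_self less_add_one not_le order_trans)
  qed
  then show ?thesis using True by (simp add: G_def)
next
  case False
  then have "K > 0" using assms(3) by simp
  have "(2 * (1 / K) - K * (1 / K)\<^sup>2) * (norm (dh x - dh y))\<^sup>2 \<le> inner (x - y) (dh x - dh y)"
    by (rule convex_smooth_cocoercive_param[OF assms(1,2)])
  with \<open>K > 0\<close> show ?thesis by (simp add: field_simps power2_eq_square)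
qed

lemma strongly_convex_smooth_cocoercive:
  fixes f :: "'a::real_inner \<Rightarrow> real"
  assumes smooth: "L_smooth f df L" and sconv: "strongly_convex f df m" and "m \<le> L"
  shows "(norm (df x - df y))\<^sup>2 + m * L * (norm (x - y))\<^sup>2 \<le> (L + m) * inner (x - y) (df x - df y)"
proof -
  define h where "h z = f z - m / 2 * (norm z)\<^sup>2" for z
  define dh where "dh z = df z - m *\<^sub>R z" for z
  have "L_smooth h dh (L - m)"
    unfolding L_smooth_def
  proof (intro allI)
    fix x y :: 'a
    have "f y \<le> f x + inner (df x) (y - x) + L / 2 * (norm (y - x))\<^sup>2"
      using smooth unfolding L_smooth_def by blast
    then show "h y \<le> h x + inner (dh x) (y - x) + (L - m) / 2 * (norm (y - x))\<^sup>2"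
      unfolding h_def dh_def
      by (simp add: power2_norm_eq_inner inner_diff_left inner_diff_right inner_commute algebra_simps)
        (simp add: field_simps)
  qed
  moreover have "strongly_convex h dh 0"
    using sconv unfolding strongly_convex_def h_def dh_def
    by (simp add: power2_norm_eq_inner inner_diff_left inner_diff_right inner_commute algebra_simps)
  ultimately have "(norm (dh x - dh y))\<^sup>2 \<le> (L - m) * inner (x - y) (dh x - dh y)"
    using \<open>m \<le> L\<close> by (intro convex_smooth_cocoercive) simp_all
  then show ?thesis unfolding dh_def
    by (simp add: power2_norm_eq_inner inner_diff_left inner_diff_right inner_commute algebra_simps)
qed

lemma cocoercive_gradient_step_bound:
  fixes d \<Delta> u :: "'a::real_inner"
  assumes co: "(norm \<Delta>)\<^sup>2 + m * L * (norm d)\<^sup>2 \<le> (L + m) * inner d \<Delta>"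
    and "0 < m" "m \<le> L" and "0 < \<eta>" "\<eta> \<le> 1 / (L + m)"
  shows "\<eta>\<^sup>2 * (norm \<Delta>)\<^sup>2 - 2 * \<eta> * inner u \<Delta>
    \<le> - \<eta> * m * (norm d)\<^sup>2 + 2 * \<eta> * L * (norm (d - u))\<^sup>2"
proof -
  define D where "D = (norm \<Delta>)\<^sup>2"
  define n where "n = (norm d)\<^sup>2"
  have "L + m > 0" "L > 0" using assms by simp_all
  have young: "2 * inner (d - u) \<Delta> \<le> 2 * L * (norm (d - u))\<^sup>2 + D / (2 * L)"
    using Youngs_inequality_inner[of "2 * L"] \<open>L > 0\<close> by (simp add: D_def)
  have "\<eta> * (L + m) \<le> 1"
    using assms \<open>L + m > 0\<close> by (simp add: field_simps)
  then have "\<eta> * (L + m) * D \<le> D"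
    using mult_right_mono[of "\<eta> * (L + m)" 1 D] by (simp add: D_def)
  then have "\<eta> * D \<le> D / (L + m)"
    using \<open>L + m > 0\<close> by (simp add: field_simps)
  moreover have "D / (2 * L) \<le> D / (L + m)"
    using assms by (intro divide_left_mono) (simp_all add: D_def)
  moreover have "2 * (D + m * L * n) / (L + m) \<le> 2 * inner d \<Delta>"
    using co \<open>L + m > 0\<close> by (simp add: D_def n_def field_simps)
  ultimately have "\<eta> * D + D / (2 * L) - 2 * inner d \<Delta>
      \<le> D / (L + m) + D / (L + m) - 2 * (D + m * L * n) / (L + m)"
    by linarith
  also have "\<dots> = - (2 * L) * (m * n) / (L + m)"
    by (simp add: add_divide_distrib[symmetric] diff_divide_distrib[symmetric] algebra_simps)
  also have "\<dots> \<le> - m * n"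
    using assms \<open>L + m > 0\<close> by (simp add: field_simps n_def mult_right_mono)
  finally have "\<eta> * D + D / (2 * L) - 2 * inner d \<Delta> \<le> - m * n" .
  with young have "\<eta> * D - 2 * inner u \<Delta> \<le> - m * n + 2 * L * (norm (d - u))\<^sup>2"
    by (simp add: inner_diff_left)
  from mult_left_mono[OF this less_imp_le[OF \<open>0 < \<eta>\<close>]] show ?thesis
    by (simp add: D_def n_def algebra_simps power2_eq_square)
qed

lemma averaged_gradient_step_bound:
  fixes d \<Delta> :: "'i \<Rightarrow> 'a::real_inner"
  assumes p: "\<And>c. c \<in> I \<Longrightarrow> p c \<ge> 0" and p_sum: "sum p I = 1"
    and co: "\<And>c. c \<in> I \<Longrightarrow>
      (norm (\<Delta> c))\<^sup>2 + m * L * (norm (d c))\<^sup>2 \<le> (L + m) * inner (d c) (\<Delta> c)"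
    and m: "0 < m" "m \<le> L" and \<eta>: "0 < \<eta>" "\<eta> \<le> 1 / (L + m)"
  defines "u \<equiv> \<Sum>c\<in>I. p c *\<^sub>R d c" and "g \<equiv> \<Sum>c\<in>I. p c *\<^sub>R \<Delta> c"
  shows "(norm (u - \<eta> *\<^sub>R g))\<^sup>2
    \<le> (1 - \<eta> * m) * (norm u)\<^sup>2 + 2 * \<eta> * L * (\<Sum>c\<in>I. p c * (norm (d c - u))\<^sup>2)"
proof -
  have "(norm (u - \<eta> *\<^sub>R g))\<^sup>2 = (norm u)\<^sup>2 + \<eta>\<^sup>2 * (norm g)\<^sup>2 - 2 * \<eta> * inner u g"
    by (simp add: power2_norm_eq_inner inner_commute algebra_simps) (simp add: power2_eq_square)
  also have "\<dots> \<le> (norm u)\<^sup>2 + (\<Sum>c\<in>I. p c * (\<eta>\<^sup>2 * (norm (\<Delta> c))\<^sup>2 - 2 * \<eta> * inner u (\<Delta> c)))"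
  proof -
    have "(norm g)\<^sup>2 \<le> (\<Sum>c\<in>I. p c * (norm (\<Delta> c))\<^sup>2)"
      unfolding g_def using p p_sum by (rule norm_weighted_mean_sq_le)
    then have "\<eta>\<^sup>2 * (norm g)\<^sup>2 \<le> \<eta>\<^sup>2 * (\<Sum>c\<in>I. p c * (norm (\<Delta> c))\<^sup>2)"
      by (rule mult_left_mono) simp
    moreover have "inner u g = (\<Sum>c\<in>I. p c * inner u (\<Delta> c))"
      by (simp add: g_def inner_sum_right)
    ultimately show ?thesis
      by (simp add: sum_subtractf sum_distrib_left algebra_simps)
  qed
  also have "\<dots> \<le> (norm u)\<^sup>2
      + (\<Sum>c\<in>I. p c * (- \<eta> * m * (norm (d c))\<^sup>2 + 2 * \<eta> * L * (norm (d c - u))\<^sup>2))"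
    using p co m \<eta> by (intro add_left_mono sum_mono mult_left_mono cocoercive_gradient_step_bound)
  also have "\<dots> = (norm u)\<^sup>2 - \<eta> * m * (\<Sum>c\<in>I. p c * (norm (d c))\<^sup>2)
      + 2 * \<eta> * L * (\<Sum>c\<in>I. p c * (norm (d c - u))\<^sup>2)"
    by (simp add: sum.distrib sum_subtractf sum_distrib_left algebra_simps)
  also have "\<dots> \<le> (1 - \<eta> * m) * (norm u)\<^sup>2 + 2 * \<eta> * L * (\<Sum>c\<in>I. p c * (norm (d c - u))\<^sup>2)"
  proof -
    have "(norm u)\<^sup>2 \<le> (\<Sum>c\<in>I. p c * (norm (d c))\<^sup>2)"
      unfolding u_def using p p_sum by (rule norm_weighted_mean_sq_le)
    then show ?thesis
      using m \<eta> by (simp add: algebra_simps mult_left_mono)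
  qed
  finally show ?thesis .
qed

lemma sum_norm_diff_diff_sq_le:
  fixes a b :: "'i \<Rightarrow> 'a::real_inner"
  assumes "\<And>c. c \<in> I \<Longrightarrow> p c \<ge> 0"
  shows "(\<Sum>c\<in>I. p c * (norm ((a c - b c) - (\<alpha> - \<beta>)))\<^sup>2)
    \<le> 2 * (\<Sum>c\<in>I. p c * ((norm (a c - \<alpha>))\<^sup>2 + (norm (b c - \<beta>))\<^sup>2))"
  unfolding sum_distrib_left
proof (rule sum_mono)
  fix c assume "c \<in> I"
  have "(a c - b c) - (\<alpha> - \<beta>) = (a c - \<alpha>) - (b c - \<beta>)" by simp
  then have "(norm ((a c - b c) - (\<alpha> - \<beta>)))\<^sup>2 \<le> 2 * ((norm (a c - \<alpha>))\<^sup>2 + (norm (b c - \<beta>))\<^sup>2)"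
    by (simp only: norm_diff_sq_le)
  from mult_left_mono[OF this assms[OF \<open>c \<in> I\<close>]]
  show "p c * (norm ((a c - b c) - (\<alpha> - \<beta>)))\<^sup>2
      \<le> 2 * (p c * ((norm (a c - \<alpha>))\<^sup>2 + (norm (b c - \<beta>))\<^sup>2))"
    by (simp add: mult.left_commute)
qed

theorem lemma4p1:
  fixes N :: nat and p :: "nat \<Rightarrow> real"
    and f :: "nat \<Rightarrow> real ^ 'd \<Rightarrow> real" and gradf :: "nat \<Rightarrow> real ^ 'd \<Rightarrow> real ^ 'd"
    and L m \<eta> :: real
    and \<theta>s \<beta>s :: "nat \<Rightarrow> real ^ 'd"
  assumes N: "N \<ge> 1"
    and p_pos: "\<And>c. c \<in> {1..N} \<Longrightarrow> p c > 0"
    and p_sum: "(\<Sum>c=1..N. p c) = 1"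
    and grad: "\<And>c x. c \<in> {1..N} \<Longrightarrow> (f c has_derivative (\<lambda>h. inner (gradf c x) h)) (at x)"
    and smooth: "\<And>c. c \<in> {1..N} \<Longrightarrow> L_smooth (f c) (gradf c) L"
    and sconv: "\<And>c. c \<in> {1..N} \<Longrightarrow> strongly_convex (f c) (gradf c) m"
    and m_pos: "0 < m" and mL: "m \<le> L"
    and eta_pos: "0 < \<eta>" and eta_le: "\<eta> \<le> 1 / (L + m)"
  shows
    "let \<theta> = (\<Sum>c=1..N. p c *\<^sub>R \<theta>s c);
         \<beta> = (\<Sum>c=1..N. p c *\<^sub>R \<beta>s c);
         G\<theta> = (\<Sum>c=1..N. p c *\<^sub>R gradf c (\<theta>s c));
         G\<beta> = (\<Sum>c=1..N. p c *\<^sub>R gradf c (\<beta>s c))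
     in (norm (\<beta> - \<theta> - \<eta> *\<^sub>R (G\<beta> - G\<theta>)))\<^sup>2
        \<le> (1 - \<eta> * m) * (norm (\<beta> - \<theta>))\<^sup>2
          + 4 * \<eta> * L * (\<Sum>c=1..N. p c * ((norm (\<beta>s c - \<beta>))\<^sup>2 + (norm (\<theta>s c - \<theta>))\<^sup>2))"
proof -
  define \<theta> where "\<theta> = (\<Sum>c=1..N. p c *\<^sub>R \<theta>s c)"
  define \<beta> where "\<beta> = (\<Sum>c=1..N. p c *\<^sub>R \<beta>s c)"
  define G\<theta> where "G\<theta> = (\<Sum>c=1..N. p c *\<^sub>R gradf c (\<theta>s c))"
  define G\<beta> where "G\<beta> = (\<Sum>c=1..N. p c *\<^sub>R gradf c (\<beta>s c))"
  define d where "d c = \<beta>s c - \<theta>s c" for c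
  define \<Delta> where "\<Delta> c = gradf c (\<beta>s c) - gradf c (\<theta>s c)" for c
  have p_nonneg: "\<And>c. c \<in> {1..N} \<Longrightarrow> p c \<ge> 0"
    using p_pos by (simp add: less_imp_le)
  have co: "(norm (\<Delta> c))\<^sup>2 + m * L * (norm (d c))\<^sup>2 \<le> (L + m) * inner (d c) (\<Delta> c)"
    if "c \<in> {1..N}" for c
    unfolding d_def \<Delta>_def using smooth[OF that] sconv[OF that] mL by (rule strongly_convex_smooth_cocoercive)
  have "\<beta> - \<theta> = (\<Sum>c=1..N. p c *\<^sub>R d c)" and "G\<beta> - G\<theta> = (\<Sum>c=1..N. p c *\<^sub>R \<Delta> c)"
    by (simp_all add: \<theta>_def \<beta>_def G\<theta>_def G\<beta>_def d_def \<Delta>_def sum_subtractf scaleR_diff_right)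
  then have "(norm (\<beta> - \<theta> - \<eta> *\<^sub>R (G\<beta> - G\<theta>)))\<^sup>2
      \<le> (1 - \<eta> * m) * (norm (\<beta> - \<theta>))\<^sup>2 + 2 * \<eta> * L * (\<Sum>c=1..N. p c * (norm (d c - (\<beta> - \<theta>)))\<^sup>2)"
    using averaged_gradient_step_bound[OF p_nonneg p_sum co m_pos mL eta_pos eta_le] by simp
  moreover have "2 * \<eta> * L * (\<Sum>c=1..N. p c * (norm (d c - (\<beta> - \<theta>)))\<^sup>2)
      \<le> 2 * \<eta> * L * (2 * (\<Sum>c=1..N. p c * ((norm (\<beta>s c - \<beta>))\<^sup>2 + (norm (\<theta>s c - \<theta>))\<^sup>2)))"
    using eta_pos m_pos mL unfolding d_def
    by (intro mult_left_mono sum_norm_diff_diff_sq_le) (simp_all add: p_nonneg)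
  ultimately show ?thesis
    unfolding Let_def \<theta>_def[symmetric] \<beta>_def[symmetric] G\<theta>_def[symmetric] G\<beta>_def[symmetric]
    by linarith
qed

end
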